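(* Let $\mathcal{D}$ be a dome over a convex polygon $P$ lying in the $xy$-plane with the dome above it. Let $b_i$ be a vertex of $P$ with interior angle at least $120^\circ$, with incident dome triangles $t_1, t_2, t_3$ in order around $b_i$, where $t_1$ and $t_3$ are incident to the two edges of $P$ at $b_i$. If $t_1$ has a downward normal, then $t_1$ is not coplanar with $t_2$, and hence the face of $\mathcal{D}$ containing $t_1$ has face angle $60^\circ$ at $b_i$.
   Context: All equilateral triangles have unit edge length. A polyiamond is a polygon that is a union of unit equilateral triangles. A dome over a convex polygon $P$ is the surface consisting of all faces other than $P$ of a convex polyhedron that has $P$ as one face and all of whose other faces are convex polyiamonds; the dome triangles are the unit triangles composing the dome's faces. A triangle or face has a downward (upward) normal if its outward normal has negative (positive) $z$-component. *)

theory Defs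
  imports "HOL-Analysis.Analysis"
begin

type_synonym pt = "real^3"

definition vec_angle :: "pt \<Rightarrow> pt \<Rightarrow> real" where
  "vec_angle u v = arccos ((u \<bullet> v) / (norm u * norm v))"

text \<open>Interior angle of a convex polygon F at its vertex b: the largest angle
  subtended at b by two points of F.\<close>
definition face_angle :: "pt set \<Rightarrow> pt \<Rightarrow> real" where
  "face_angle F b = Sup {vec_angle (x - b) (y - b) | x y. x \<in> F \<and> y \<in> F \<and> x \<noteq> b \<and> y \<noteq> b}"

definition unit_triangle :: "pt set \<Rightarrow> bool" where
  "unit_triangle t \<longleftrightarrow> (\<exists>a b c. t = convex hull {a, b, c} \<and>
      dist a b = 1 \<and> dist b c = 1 \<and> dist a c = 1)"

definition convex_polyiamond :: "pt set \<Rightarrow> bool" where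
  "convex_polyiamond F \<longleftrightarrow> convex F \<and> aff_dim F = 2 \<and>
     (\<exists>S. finite S \<and> (\<forall>t\<in>S. unit_triangle t) \<and> \<Union>S = F \<and>
        (\<forall>t\<in>S. \<forall>t'\<in>S. t \<noteq> t' \<longrightarrow> rel_interior t \<inter> rel_interior t' = {}))"

text \<open>Q is a convex polyhedron having P as a face, all other faces (facets) being
  convex polyiamonds; T is the set of dome triangles, i.e. the unit triangles
  composing the faces of the dome (the facets of Q other than P).\<close>
definition dome :: "pt set \<Rightarrow> pt set \<Rightarrow> pt set set \<Rightarrow> bool" where
  "dome Q P T \<longleftrightarrow> polytope Q \<and> aff_dim Q = 3 \<and> P facet_of Q \<and>
     (\<forall>F. F facet_of Q \<and> F \<noteq> P \<longrightarrow> convex_polyiamond F) \<and>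
     finite T \<and> (\<forall>t\<in>T. unit_triangle t) \<and>
     (\<forall>t\<in>T. \<exists>F. F facet_of Q \<and> F \<noteq> P \<and> t \<subseteq> F) \<and>
     (\<forall>F. F facet_of Q \<and> F \<noteq> P \<longrightarrow> \<Union>{t\<in>T. t \<subseteq> F} = F) \<and>
     (\<forall>t\<in>T. \<forall>t'\<in>T. t \<noteq> t' \<longrightarrow> rel_interior t \<inter> rel_interior t' = {})"

text \<open>A dome triangle t has a downward normal: its outward normal (as part of the
  boundary of Q) has negative z-component.\<close>
definition downward_normal :: "pt set \<Rightarrow> pt set \<Rightarrow> bool" where
  "downward_normal Q t \<longleftrightarrow> (\<exists>n d. n $ 3 < 0 \<and> (\<forall>x\<in>Q. n \<bullet> x \<le> d) \<and> (\<forall>x\<in>t. n \<bullet> x = d))"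

end

theory Submission
  imports Defs
begin

text \<open>
  At the vertex \<open>b\<close> write \<open>t\<^sub>1 = conv {b, b + u\<^sub>1, b + w\<^sub>1}\<close> with \<open>u\<^sub>1\<close> along the base edge
  \<open>e\<^sub>1\<close> and \<open>w\<^sub>1\<close> rising, and likewise \<open>t\<^sub>3 = conv {b, b + u\<^sub>2, b + w\<^sub>3}\<close> with \<open>u\<^sub>2\<close> along
  \<open>e\<^sub>2\<close>. The downward normal \<open>n\<close> of \<open>t\<^sub>1\<close> is orthogonal to \<open>u\<^sub>1, w\<^sub>1\<close>, and since \<open>Q\<close> lies in
  the half-space \<open>n \<bullet> (x - b) \<le> 0\<close> we get \<open>n \<bullet> u\<^sub>2 < 0\<close> and \<open>n \<bullet> w\<^sub>3 \<le> 0\<close>; seen from above,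
  \<open>w\<^sub>1\<close> and \<open>u\<^sub>2\<close> lie on opposite sides of the line of \<open>u\<^sub>1\<close>. If \<open>t\<^sub>2\<close> were coplanar with
  \<open>t\<^sub>1\<close>, its common edge with \<open>t\<^sub>3\<close> would lie in that plane, so \<open>w\<^sub>3 = a u\<^sub>1 + c w\<^sub>1\<close> with
  \<open>c > 0\<close>. As \<open>t\<^sub>2\<close> does not overlap \<open>t\<^sub>1\<close>, \<open>a \<le> 0\<close>; as \<open>t\<^sub>2\<close> is a \<open>60\<degree>\<close> wedge at \<open>b\<close>
  sharing an edge with \<open>t\<^sub>1\<close>, \<open>a + c \<ge> 0\<close>; and then \<open>w\<^sub>3\<close> cannot make a \<open>60\<degree>\<close> angle
  with \<open>u\<^sub>2\<close>.

  Near \<open>b\<close>, a facet \<open>F \<supseteq> t\<^sub>1\<close> is covered by the dome triangles through \<open>b\<close> lying in \<open>F\<close>.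
  Neither \<open>t\<^sub>2\<close> (not coplanar with \<open>t\<^sub>1\<close>) nor \<open>t\<^sub>3\<close> (\<open>n \<bullet> u\<^sub>2 < 0\<close>) is among them, so near
  \<open>b\<close>, and by convexity everywhere, \<open>F\<close> lies in the \<open>60\<degree>\<close> cone of \<open>t\<^sub>1\<close> at \<open>b\<close>.
\<close>

section \<open>Convex sets, faces and affine hulls\<close>

lemma convex_hull_3_at_vertex:
  fixes b x y :: "'a::real_vector"
  shows "p \<in> convex hull {b, b + x, b + y} \<longleftrightarrow>
           (\<exists>l m. 0 \<le> l \<and> 0 \<le> m \<and> l + m \<le> 1 \<and> p = b + l *\<^sub>R x + m *\<^sub>R y)"
  by (auto simp: convex_hull_3_alt)

lemma convex_ray_shrink:
  fixes S :: "'a::real_vector set"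
  assumes "convex S" "a \<in> S" "a + k *\<^sub>R v \<in> S" "0 \<le> m" "m \<le> k"
  shows "a + m *\<^sub>R v \<in> S"
proof (cases "k = 0")
  case False
  then have "(1 - m/k) *\<^sub>R a + (m/k) *\<^sub>R (a + k *\<^sub>R v) \<in> S"
    using assms by (intro convexD) (auto simp: field_simps)
  then show ?thesis using False by (simp add: algebra_simps)
qed (use assms in auto)

lemma rel_interior_Int_nonempty:
  fixes S T :: "'a::euclidean_space set"
  assumes "convex T" "T \<subseteq> affine hull S" "y \<in> rel_interior S" "y \<in> T"
  shows "rel_interior S \<inter> rel_interior T \<noteq> {}"
proof -
  obtain e where e: "e > 0" "ball y e \<inter> affine hull S \<subseteq> rel_interior S"
    using assms(3) openin_rel_interior[of S] unfolding openin_contains_ball by blast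
  have "y \<in> closure (rel_interior T)"
    using convex_closure_rel_interior[OF assms(1)] assms(4) closure_subset by blast
  then obtain y' where "y' \<in> rel_interior T" "dist y y' < e"
    using closure_approachableD e(1) by blast
  then show ?thesis using e(2) assms(2) rel_interior_subset by fastforce
qed

lemma affine_hull_eq_of_aff_dim_eq:
  fixes S T :: "'a::euclidean_space set"
  assumes "S \<subseteq> T" "aff_dim S = aff_dim T"
  shows "affine hull S = affine hull T"
proof (cases "S = {}")
  case True
  then show ?thesis using assms(2) aff_dim_empty[of T] by simp
next
  case False
  then show ?thesis using assms by (intro affine_dim_equal) (auto simp: hull_mono)
qed

lemma coplanar_Un_imp_subset_affine_hull:
  fixes S T :: "'a::euclidean_space set"
  assumes "coplanar (S \<union> T)" "aff_dim S = 2"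
  shows "T \<subseteq> affine hull S"
proof -
  obtain a b c where abc: "S \<union> T \<subseteq> affine hull {a, b, c}"
    using assms(1) unfolding coplanar_def by blast
  have sub: "affine hull S \<subseteq> affine hull {a, b, c}" using abc by (intro hull_minimal) auto
  have "card {a, b, c} \<le> 3" by (simp add: card_insert_if)
  then have "aff_dim {a, b, c} \<le> 2"
    using aff_dim_le_card[of "{a, b, c}"] by simp
  moreover have "S \<noteq> {}" using assms(2) by auto
  ultimately have "affine hull S = affine hull {a, b, c}"
    using aff_dim_subset[OF sub] assms(2) sub by (intro affine_dim_equal) auto
  then show ?thesis using abc by auto
qed

lemma affine_hull_triangle_in_hyperplane:
  assumes "n \<bullet> u = 0" "n \<bullet> w = 0"
  shows "affine hull {b, b + u, b + w} \<subseteq> {x. n \<bullet> x = n \<bullet> b}"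
  using assms by (intro hull_minimal) (auto simp: inner_add_right affine_hyperplane)

lemma aff_dim_1_other_point:
  assumes "aff_dim S = 1" "b \<in> S"
  obtains p where "p \<in> S" "p \<noteq> b"
proof -
  have "S \<noteq> {b}" using assms(1) by auto
  then show thesis using that assms(2) by blast
qed

lemma convex_locally_in_cone:
  fixes F :: "'a::real_normed_vector set"
  assumes "convex F" "b \<in> F" "0 < e"
    and local: "\<And>y. y \<in> F \<Longrightarrow> dist b y < e \<Longrightarrow> y \<in> convex hull {b, b + u, b + w}"
    and "x \<in> F"
  obtains l m where "0 \<le> l" "0 \<le> m" "x = b + l *\<^sub>R u + m *\<^sub>R w"
proof (cases "x = b")
  case True
  then show thesis using that[of 0 0] by simp
next
  case False
  define d where "d = min 1 (e / (2 * norm (x - b)))"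
  have d: "0 < d" "d \<le> 1" using False assms(3) by (auto simp: d_def)
  have "d * norm (x - b) \<le> e / (2 * norm (x - b)) * norm (x - b)"
    by (intro mult_right_mono) (auto simp: d_def)
  also have "\<dots> < e" using False assms(3) by simp
  finally have "dist b (b + d *\<^sub>R (x - b)) < e" using d(1) by (simp add: dist_norm)
  moreover have "b + d *\<^sub>R (x - b) \<in> F"
    using convex_ray_shrink[OF assms(1,2), of 1 "x - b" d] assms(5) d by simp
  ultimately have "b + d *\<^sub>R (x - b) \<in> convex hull {b, b + u, b + w}" using local by blast
  then obtain l m where lm: "0 \<le> l" "0 \<le> m" "b + d *\<^sub>R (x - b) = b + l *\<^sub>R u + m *\<^sub>R w"
    unfolding convex_hull_3_at_vertex by blast
  then have "(1 / d) *\<^sub>R (d *\<^sub>R (x - b)) = (1 / d) *\<^sub>R (l *\<^sub>R u + m *\<^sub>R w)"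
    by (simp add: add.assoc)
  then have "x = b + (l / d) *\<^sub>R u + (m / d) *\<^sub>R w"
    using d(1) by (simp add: scaleR_add_right algebra_simps)
  then show thesis using that[of "l / d" "m / d"] lm(1,2) d(1) by simp
qed

lemma faces_aff_dim_1_eq:
  fixes P :: "'a::euclidean_space set"
  assumes "e1 face_of P" "e2 face_of P" "aff_dim e1 = 1" "aff_dim e2 = 1"
    and "p \<in> e1 \<inter> e2" "q \<in> e1 \<inter> e2" "p \<noteq> q"
  shows "e1 = e2"
proof -
  have "aff_dim {p, q} \<le> aff_dim (e1 \<inter> e2)" using assms(5,6) by (intro aff_dim_subset) auto
  then have dim: "1 \<le> aff_dim (e1 \<inter> e2)" using assms(7) by simp
  have "e1 \<inter> e2 = e" if "e face_of P" "aff_dim e = 1" "e1 \<inter> e2 \<subseteq> e" for e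
  proof (rule ccontr)
    assume "e1 \<inter> e2 \<noteq> e"
    moreover have "(e1 \<inter> e2) face_of e"
      using face_of_subset[OF face_of_Int[OF assms(1,2)]] that face_of_imp_subset by blast
    ultimately show False
      using face_of_aff_dim_lt[OF face_of_imp_convex[OF that(1)]] dim that(2) by fastforce
  qed
  from this[of e1] this[of e2] show ?thesis using assms(1-4) by blast
qed

lemma extreme_point_of_opposite_ray:
  assumes "b extreme_point_of P" "b + s *\<^sub>R u \<in> P" "b - t *\<^sub>R u \<in> P" "0 < s" "0 < t" "u \<noteq> 0"
  shows False
proof -
  define th where "th = s / (s + t)"
  have "0 < th" "th < 1" using assms(4,5) by (auto simp: th_def)
  moreover have "b = (1 - th) *\<^sub>R (b + s *\<^sub>R u) + th *\<^sub>R (b - t *\<^sub>R u)"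
  proof -
    have "(1 - th) * s - th * t = 0" using assms(4,5) by (simp add: th_def field_simps)
    moreover have "(1 - th) *\<^sub>R (b + s *\<^sub>R u) + th *\<^sub>R (b - t *\<^sub>R u)
        = b + ((1 - th) * s - th * t) *\<^sub>R u"
      by (simp add: algebra_simps)
    ultimately show ?thesis by simp
  qed
  moreover have "(b + s *\<^sub>R u) - (b - t *\<^sub>R u) = (s + t) *\<^sub>R u" by (simp add: algebra_simps)
  then have "b + s *\<^sub>R u \<noteq> b - t *\<^sub>R u"
    using assms(4-6) by (metis add_pos_pos eq_iff_diff_eq_0 less_irrefl scaleR_eq_0_iff)
  ultimately have "b \<in> open_segment (b + s *\<^sub>R u) (b - t *\<^sub>R u)" by (auto simp: in_segment)
  then show False using assms(1-3) by (auto simp: extreme_point_of_def)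
qed

lemma edge_directions_distinct:
  fixes P :: "'a::euclidean_space set"
  assumes b: "b extreme_point_of P"
    and e1: "e1 face_of P" "aff_dim e1 = 1" "b \<in> e1" "b + k1 *\<^sub>R u \<in> e1" "0 < k1"
    and e2: "e2 face_of P" "aff_dim e2 = 1" "b \<in> e2" "b + k2 *\<^sub>R v \<in> e2" "0 < k2"
    and "e1 \<noteq> e2" "u \<noteq> 0"
  shows "v \<noteq> u" "v \<noteq> -u"
proof -
  show "v \<noteq> u"
  proof
    assume "v = u"
    define k where "k = min k1 k2"
    have "b + k *\<^sub>R u \<in> e1" "b + k *\<^sub>R u \<in> e2"
      using convex_ray_shrink[OF face_of_imp_convex[OF e1(1)] e1(3,4), of k]
        convex_ray_shrink[OF face_of_imp_convex[OF e2(1)] e2(3,4), of k] e1(5) e2(5) \<open>v = u\<close>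
      by (auto simp: k_def)
    moreover have "b \<noteq> b + k *\<^sub>R u" using e1(5) e2(5) \<open>u \<noteq> 0\<close> by (simp add: k_def)
    ultimately show False
      using faces_aff_dim_1_eq[OF e1(1) e2(1) e1(2) e2(2)] e1(3) e2(3) \<open>e1 \<noteq> e2\<close> by blast
  qed
  show "v \<noteq> -u"
  proof
    assume "v = -u"
    then show False
      using extreme_point_of_opposite_ray[OF b, of k1 u k2] e1(4,5) e2(4,5) \<open>u \<noteq> 0\<close>
        face_of_imp_subset[OF e1(1)] face_of_imp_subset[OF e2(1)] by auto
  qed
qed

lemma facet_in_supporting_hyperplane_unique:
  fixes Q :: "'a::euclidean_space set"
  assumes "convex Q" "aff_dim Q = DIM('a)" "a \<noteq> 0" "Q \<subseteq> {x. a \<bullet> x \<ge> c}"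
    and "F facet_of Q" "F \<subseteq> {x. a \<bullet> x = c}" "F' facet_of Q" "F' \<subseteq> {x. a \<bullet> x = c}"
  shows "F = F'"
proof -
  define G where "G = Q \<inter> {x. a \<bullet> x = c}"
  have G: "G face_of Q" unfolding G_def
    by (rule face_of_Int_supporting_hyperplane_ge[OF assms(1)]) (use assms(4) in auto)
  have "aff_dim G \<le> aff_dim {x. a \<bullet> x = c}" unfolding G_def by (rule aff_dim_subset) blast
  then have dimG: "aff_dim G \<le> DIM('a) - 1" using assms(3) by (simp add: aff_dim_hyperplane)
  have "H = G" if "H facet_of Q" "H \<subseteq> {x. a \<bullet> x = c}" for H
  proof (rule ccontr)
    assume "H \<noteq> G"
    have H: "H face_of Q" "aff_dim H = DIM('a) - 1"
      using that(1) assms(2) by (auto simp: facet_of_def)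
    then have "H face_of G"
      using face_of_subset[OF H(1)] that(2) face_of_imp_subset[OF G] face_of_imp_subset[OF H(1)]
      by (auto simp: G_def)
    then have "aff_dim H < aff_dim G"
      using face_of_aff_dim_lt[OF face_of_imp_convex[OF G]] \<open>H \<noteq> G\<close> by blast
    then show False using dimG H(2) by simp
  qed
  then show ?thesis using assms(5-8) by metis
qed

section \<open>Equilateral triangles\<close>

definition equilateral_pair :: "'a::real_inner \<Rightarrow> 'a \<Rightarrow> bool" where
  "equilateral_pair x y \<longleftrightarrow> norm x = 1 \<and> norm y = 1 \<and> x \<bullet> y = 1/2"

lemma equilateral_pair_inner:
  assumes "equilateral_pair x y"
  shows "x \<bullet> x = 1" "y \<bullet> y = 1" "x \<bullet> y = 1/2" "y \<bullet> x = 1/2"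
  using assms by (simp_all add: equilateral_pair_def dot_square_norm inner_commute)

lemma equilateral_pair_of_vertices:
  fixes b c d :: "'a::real_inner"
  assumes "dist b c = 1" "dist b d = 1" "dist c d = 1"
  shows "equilateral_pair (c - b) (d - b)"
proof -
  have "norm (c - b) = 1" "norm (d - b) = 1" "norm ((c - b) - (d - b)) = 1"
    using assms by (simp_all add: dist_norm norm_minus_commute)
  then show ?thesis
    unfolding equilateral_pair_def
    by (simp add: norm_eq_1 inner_diff_left inner_diff_right inner_commute)
qed

lemma equilateral_cone_inner_bound:
  assumes "equilateral_pair x y" "0 \<le> a" "0 \<le> b" "0 \<le> c" "0 \<le> d"
  shows "norm (a *\<^sub>R x + b *\<^sub>R y) * norm (c *\<^sub>R x + d *\<^sub>R y)
           \<le> 2 * ((a *\<^sub>R x + b *\<^sub>R y) \<bullet> (c *\<^sub>R x + d *\<^sub>R y))"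
proof -
  note xy = equilateral_pair_inner[OF assms(1)]
  let ?p = "a *\<^sub>R x + b *\<^sub>R y" and ?q = "c *\<^sub>R x + d *\<^sub>R y"
  have pq: "2 * (?p \<bullet> ?q) = 2*a*c + 2*b*d + a*d + b*c"
    and pp: "?p \<bullet> ?p = a*a + a*b + b*b" and qq: "?q \<bullet> ?q = c*c + c*d + d*d"
    by (simp_all add: inner_add_left inner_add_right xy algebra_simps)
  have "(a*a + a*b + b*b) * (c*c + c*d + d*d) \<le> (2*a*c + 2*b*d + a*d + b*c)^2"
    using assms(2-5) by sos
  then have "norm ?p * norm ?q \<le> sqrt ((2 * (?p \<bullet> ?q))^2)"
    unfolding norm_eq_sqrt_inner real_sqrt_mult[symmetric] pp qq pq
    by (rule real_sqrt_le_mono)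
  also have "\<dots> = 2 * (?p \<bullet> ?q)"
    using assms(2-5) unfolding pq by simp
  finally show ?thesis .
qed

lemma equilateral_triangle_angle_bound:
  assumes "equilateral_pair x y"
    and "p \<in> convex hull {b, b + x, b + y}" "q \<in> convex hull {b, b + x, b + y}"
  shows "norm (p - b) * norm (q - b) \<le> 2 * ((p - b) \<bullet> (q - b))"
proof -
  obtain l m where p: "0 \<le> l" "0 \<le> m" "p - b = l *\<^sub>R x + m *\<^sub>R y"
    using assms(2) unfolding convex_hull_3_at_vertex by auto
  obtain l' m' where q: "0 \<le> l'" "0 \<le> m'" "q - b = l' *\<^sub>R x + m' *\<^sub>R y"
    using assms(3) unfolding convex_hull_3_at_vertex by auto
  show ?thesis
    unfolding p(3) q(3) by (rule equilateral_cone_inner_bound[OF assms(1) p(1,2) q(1,2)])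
qed

lemma equilateral_pair_not_collinear:
  assumes "equilateral_pair x y"
  shows "\<not> collinear {b, b + x, b + y}"
proof
  note xy = equilateral_pair_inner[OF assms]
  assume "collinear {b, b + x, b + y}"
  moreover have "{b, b + x, b + y} = {b + x, b, b + y}" by auto
  ultimately have "collinear {0, x, y}"
    using collinear_3[of "b + x" b "b + y"] by simp
  moreover have "x \<noteq> 0" "y \<noteq> 0" using xy by auto
  ultimately obtain c where "y = c *\<^sub>R x" by (auto simp: collinear_lemma)
  then have c: "c = 1/2" and "c * c = 1" using xy by (auto simp: equilateral_pair_def)
  then show False unfolding c by simp
qed

lemma aff_dim_equilateral_triangle:
  fixes b x y :: "'a::euclidean_space"
  assumes "equilateral_pair x y"
  shows "aff_dim (convex hull {b, b + x, b + y}) = 2"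
proof -
  have "card {b, b + x, b + y} \<le> 3"
    by (simp add: card_insert_if)
  then have "aff_dim {b, b + x, b + y} \<le> 2"
    using aff_dim_le_card[of "{b, b + x, b + y}"] by simp
  moreover have "\<not> aff_dim {b, b + x, b + y} \<le> 1"
    using equilateral_pair_not_collinear[OF assms] by (simp add: collinear_aff_dim)
  ultimately show ?thesis by (simp add: aff_dim_convex_hull)
qed

lemma equilateral_triangle_rel_interior:
  fixes b x y :: "'a::euclidean_space"
  assumes "equilateral_pair x y" "0 < l" "0 < m" "l + m < 1"
  shows "b + l *\<^sub>R x + m *\<^sub>R y \<in> rel_interior (convex hull {b, b + x, b + y})"
proof -
  have distinct: "b \<noteq> b + x" "b \<noteq> b + y" "b + x \<noteq> b + y"
    and indep: "\<not> affine_dependent {b, b + x, b + y}"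
    using equilateral_pair_not_collinear[OF assms(1), of b] collinear_3_eq_affine_dependent
    by blast+
  define u where "u p = (if p = b then 1 - l - m else if p = b + x then l else m)" for p
  have "sum u {b, b + x, b + y} = 1" "(\<Sum>p\<in>{b, b + x, b + y}. u p *\<^sub>R p) = b + l *\<^sub>R x + m *\<^sub>R y"
    using distinct by (simp_all add: u_def algebra_simps)
  moreover have "\<forall>p\<in>{b, b + x, b + y}. 0 < u p" using assms(2-4) distinct by (auto simp: u_def)
  ultimately show ?thesis
    unfolding rel_interior_convex_hull_explicit[OF indep] by blast
qed

lemma equilateral_triangle_overlap:
  fixes b u w :: "'a::euclidean_space"
  assumes "equilateral_pair u w" "0 < a" "0 < c"
    and "convex T" "b \<in> T" "b + k *\<^sub>R (a *\<^sub>R u + c *\<^sub>R w) \<in> T" "0 < k"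
    and "T \<subseteq> affine hull (convex hull {b, b + u, b + w})"
  shows "rel_interior (convex hull {b, b + u, b + w}) \<inter> rel_interior T \<noteq> {}"
proof -
  define e where "e = min k (1 / (2 * (a + c)))"
  have e: "0 < e" "e \<le> k" using assms(2,3,7) by (auto simp: e_def)
  have "e * (a + c) \<le> 1 / (2 * (a + c)) * (a + c)"
    using assms(2,3) by (intro mult_right_mono) (auto simp: e_def)
  also have "\<dots> = 1/2" using assms(2,3) by simp
  finally have "b + (e * a) *\<^sub>R u + (e * c) *\<^sub>R w \<in> rel_interior (convex hull {b, b + u, b + w})"
    using e assms(2,3)
    by (intro equilateral_triangle_rel_interior[OF assms(1)]) (auto simp: algebra_simps)
  moreover have "b + e *\<^sub>R (a *\<^sub>R u + c *\<^sub>R w) \<in> T"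
    using convex_ray_shrink[OF assms(4-6)] e by simp
  ultimately show ?thesis
    using rel_interior_Int_nonempty[OF assms(4,8)] by (simp add: algebra_simps)
qed

text \<open>In the plane of \<open>u, w\<close> the line \<open>a + c = 0\<close> carries \<open>w - u\<close>, the rotation of \<open>w\<close> by
  \<open>60\<degree>\<close> away from \<open>u\<close>: a unit vector within \<open>60\<degree>\<close> of the wedge spanned by \<open>u, w\<close>
  does not lie beyond it.\<close>
lemma equilateral_sector_bound:
  assumes "equilateral_pair u w" "norm (a *\<^sub>R u + c *\<^sub>R w) = 1" "0 < c"
    and "0 \<le> l" "0 \<le> m" "l *\<^sub>R u + m *\<^sub>R w \<noteq> 0"
    and "norm (l *\<^sub>R u + m *\<^sub>R w) \<le> 2 * ((a *\<^sub>R u + c *\<^sub>R w) \<bullet> (l *\<^sub>R u + m *\<^sub>R w))"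
  shows "0 \<le> a + c"
proof (rule ccontr)
  assume "\<not> 0 \<le> a + c"
  note uw = equilateral_pair_inner[OF assms(1)]
  let ?z = "l *\<^sub>R u + m *\<^sub>R w"
  define L where "L = 2 * ((a *\<^sub>R u + c *\<^sub>R w) \<bullet> ?z)"
  have L: "L = 2*a*l + a*m + c*l + 2*c*m"
    by (simp add: L_def inner_add_left inner_add_right uw algebra_simps)
  have zz: "?z \<bullet> ?z = l*l + l*m + m*m" and yy: "a*a + a*c + c*c = 1"
    using assms(2) by (simp_all add: norm_eq_1 inner_add_left inner_add_right uw algebra_simps)
  have "0 < l*l + l*m + m*m" using assms(6) zz by (metis inner_gt_zero_iff)
  moreover have "0 \<le> L" using assms(7) norm_ge_zero[of ?z] unfolding L_def by linarith
  moreover have "l*l + l*m + m*m \<le> L^2"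
    using power_mono[OF assms(7)[folded L_def] norm_ge_zero, of 2] zz
    by (simp add: power2_norm_eq_inner)
  moreover have "\<lbrakk>a + c < 0; 0 < c; 0 \<le> l; 0 \<le> m; a*a + a*c + c*c = 1; 0 < l*l + l*m + m*m;
      L = 2*a*l + a*m + c*l + 2*c*m; 0 \<le> L; l*l + l*m + m*m \<le> L^2\<rbrakk> \<Longrightarrow> False"
    by sos
  ultimately show False using \<open>\<not> 0 \<le> a + c\<close> assms(3-5) yy L by linarith
qed

lemma coplanar_neighbour_direction:
  fixes b u w :: "'a::euclidean_space"
  assumes t1: "t1 = convex hull {b, b + u, b + w}" "equilateral_pair u w"
    and t2: "t2 = convex hull {b, b + x, b + y}" "equilateral_pair x y" "t2 \<subseteq> affine hull t1"
    and disjoint: "rel_interior t1 \<inter> rel_interior t2 = {}"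
    and p: "p \<in> t1" "p \<in> t2" "p \<noteq> b"
    and dir: "b + k *\<^sub>R (a *\<^sub>R u + c *\<^sub>R w) \<in> t2" "0 < k" "0 < c" "norm (a *\<^sub>R u + c *\<^sub>R w) = 1"
  shows "a \<le> 0" "0 \<le> a + c"
proof -
  show "a \<le> 0"
  proof (rule ccontr)
    assume "\<not> a \<le> 0"
    moreover have "b \<in> t2" "convex t2" using t2(1) by (simp_all add: hull_inc)
    ultimately have "rel_interior t1 \<inter> rel_interior t2 \<noteq> {}"
      using equilateral_triangle_overlap[OF t1(2), of a c t2 b k] dir t2(3) t1(1) by simp
    then show False using disjoint by blast
  qed
  obtain l m where lm: "0 \<le> l" "0 \<le> m" "p - b = l *\<^sub>R u + m *\<^sub>R w"
    using p(1) unfolding t1(1) convex_hull_3_at_vertex by auto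
  have "norm (p - b) \<le> 2 * ((a *\<^sub>R u + c *\<^sub>R w) \<bullet> (p - b))"
    using equilateral_triangle_angle_bound[OF t2(2) dir(1)[unfolded t2(1)] p(2)[unfolded t2(1)]] dir(2,4)
    by simp
  moreover have "l *\<^sub>R u + m *\<^sub>R w \<noteq> 0" using lm(3) p(3) by auto
  ultimately show "0 \<le> a + c"
    using equilateral_sector_bound[OF t1(2) dir(4) dir(3) lm(1,2)] lm(3) by simp
qed

lemma face_angle_equilateral_cone:
  assumes "equilateral_pair u w" "b + u \<in> F" "b + w \<in> F"
    and cone: "\<And>x. x \<in> F \<Longrightarrow> \<exists>l m. 0 \<le> l \<and> 0 \<le> m \<and> x = b + l *\<^sub>R u + m *\<^sub>R w"
  shows "face_angle F b = pi / 3"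
proof -
  define S where "S = {vec_angle (x - b) (y - b) | x y. x \<in> F \<and> y \<in> F \<and> x \<noteq> b \<and> y \<noteq> b}"
  have uw: "norm u = 1" "norm w = 1" "u \<bullet> w = 1/2" using assms(1)
    by (simp_all add: equilateral_pair_def)
  then have "vec_angle u w = pi / 3" by (simp add: vec_angle_def uw)
  moreover have "u \<noteq> 0" "w \<noteq> 0" using assms(1) by (auto simp: equilateral_pair_def)
  ultimately have max: "pi / 3 \<in> S"
    unfolding S_def using assms(2,3) by (intro CollectI exI[of _ "b + u"] exI[of _ "b + w"]) auto
  have "s \<le> pi / 3" if s: "s \<in> S" for s
  proof -
    obtain x y where xy: "s = vec_angle (x - b) (y - b)" "x \<in> F" "y \<in> F" "x \<noteq> b" "y \<noteq> b"
      using s unfolding S_def by blast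
    obtain l m where x: "0 \<le> l" "0 \<le> m" "x - b = l *\<^sub>R u + m *\<^sub>R w"
      using cone[OF xy(2)] by auto
    obtain l' m' where y: "0 \<le> l'" "0 \<le> m'" "y - b = l' *\<^sub>R u + m' *\<^sub>R w"
      using cone[OF xy(3)] by auto
    have "norm (x - b) * norm (y - b) \<le> 2 * ((x - b) \<bullet> (y - b))"
      unfolding x(3) y(3) by (rule equilateral_cone_inner_bound[OF assms(1) x(1,2) y(1,2)])
    moreover have "0 < norm (x - b) * norm (y - b)" using xy(4,5) by simp
    ultimately have "1/2 \<le> ((x - b) \<bullet> (y - b)) / (norm (x - b) * norm (y - b))"
      "((x - b) \<bullet> (y - b)) / (norm (x - b) * norm (y - b)) \<le> 1"
      using norm_cauchy_schwarz[of "x - b" "y - b"] by (simp_all add: field_simps)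
    then show ?thesis
      using arccos_le_arccos[of "1/2"] xy(1) by (simp add: vec_angle_def)
  qed
  then show ?thesis unfolding face_angle_def S_def[symmetric] by (rule cSup_eq_maximum[OF max])
qed

lemma unit_triangle_at_vertex:
  assumes "unit_triangle t" "b extreme_point_of t"
  obtains x y where "t = convex hull {b, b + x, b + y}" "equilateral_pair x y"
proof -
  obtain a1 a2 a3 where t: "t = convex hull {a1, a2, a3}"
    and d: "dist a1 a2 = 1" "dist a2 a3 = 1" "dist a1 a3 = 1"
    using assms(1) unfolding unit_triangle_def by blast
  have "b \<in> {a1, a2, a3}" using assms(2) t extreme_point_of_convex_hull by blast
  then consider "b = a1" | "b = a2" | "b = a3" by blast
  then obtain c d where "{a1, a2, a3} = {b, c, d}" "dist b c = 1" "dist b d = 1" "dist c d = 1"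
  proof cases
    case 1 then show thesis using that[of a2 a3] d by simp
  next
    case 2 then show thesis using that[of a1 a3] d by (simp add: dist_commute insert_commute)
  next
    case 3 then show thesis using that[of a1 a2] d by (simp add: dist_commute insert_commute)
  qed
  then show thesis
    using that[of "c - b" "d - b"] t equilateral_pair_of_vertices by auto
qed

lemma aff_dim_unit_triangle:
  assumes "unit_triangle t"
  shows "aff_dim t = 2"
proof -
  obtain a b c where "t = convex hull {a, a + (b - a), a + (c - a)}"
    and "dist a b = 1" "dist a c = 1" "dist b c = 1"
    using assms unfolding unit_triangle_def by auto
  then show ?thesis using aff_dim_equilateral_triangle[OF equilateral_pair_of_vertices, of a b c a]
    by simp
qed

lemma compact_unit_triangle: "unit_triangle t \<Longrightarrow> compact t"
  unfolding unit_triangle_def by (auto intro: finite_imp_compact_convex_hull)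

section \<open>Horizontal frames in real^3\<close>

lemma inner_vec3: "(x::real^3) \<bullet> y = x$1 * y$1 + x$2 * y$2 + x$3 * y$3"
  by (simp add: inner_vec_def sum_3)

text \<open>The coordinate of \<open>x\<close> along \<open>e\<^sub>3 \<times> u\<close>; for a horizontal unit vector \<open>u\<close>,
  \<open>u, e\<^sub>3 \<times> u, e\<^sub>3\<close> is an orthonormal frame.\<close>
definition perp_coord :: "pt \<Rightarrow> pt \<Rightarrow> real" where
  "perp_coord u x = x$2 * u$1 - x$1 * u$2"

lemma inner_horizontal_frame:
  assumes "u$3 = 0" "norm u = 1"
  shows "x \<bullet> y = (x \<bullet> u) * (y \<bullet> u) + perp_coord u x * perp_coord u y + x$3 * y$3"
proof -
  have "u$1 * u$1 + u$2 * u$2 = 1"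
    using assms by (simp add: norm_eq_1 inner_vec3)
  then show ?thesis
    by (simp add: inner_vec3 perp_coord_def assms(1) algebra_simps) algebra
qed

lemma horizontal_frame_eqI:
  assumes "u$3 = 0" "norm u = 1"
    and "x \<bullet> u = y \<bullet> u" "perp_coord u x = perp_coord u y" "x$3 = y$3"
  shows "x = y"
proof -
  have "(x - y) \<bullet> (x - y) = 0"
    using assms(3-5) inner_horizontal_frame[OF assms(1,2), of "x - y" "x - y"]
    by (simp add: inner_diff_left perp_coord_def algebra_simps)
  then show ?thesis by simp
qed

lemma horizontal_unit_parallel:
  assumes "u$3 = 0" "norm u = 1" "v$3 = 0" "norm v = 1" "perp_coord u v = 0"
  shows "v = u \<or> v = -u"
proof -
  have "(v \<bullet> u)^2 = 1"
    using inner_horizontal_frame[OF assms(1,2), of v v] assms(3-5)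
    by (simp add: norm_eq_1 power2_eq_square)
  then consider "v \<bullet> u = 1" | "v \<bullet> u = -1" by (auto simp: power2_eq_1_iff)
  then show ?thesis
  proof cases
    case 1
    then have "v = u"
      using assms
      by (intro horizontal_frame_eqI[OF assms(1,2)]) (auto simp: perp_coord_def norm_eq_1)
    then show ?thesis ..
  next
    case 2
    then have "v = -u"
      using assms
      by (intro horizontal_frame_eqI[OF assms(1,2)]) (auto simp: perp_coord_def norm_eq_1)
    then show ?thesis ..
  qed
qed

lemma normal_separates_edges:
  assumes u: "u$3 = 0" "norm u = 1" and v: "v$3 = 0" "norm v = 1" "v \<noteq> u" "v \<noteq> -u"
    and w: "w$3 > 0" and n: "n$3 < 0" "n \<bullet> u = 0" "n \<bullet> w = 0" "n \<bullet> v \<le> 0"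
  shows "n \<bullet> v < 0" "perp_coord u w * perp_coord u v < 0"
proof -
  note frame = inner_horizontal_frame[OF u]
  have "perp_coord u n * perp_coord u w = - (n$3 * w$3)" using frame[of n w] n(2,3) by simp
  also have "\<dots> > 0" using n(1) w by (simp add: mult_neg_pos)
  finally have nw: "perp_coord u n * perp_coord u w > 0" .
  have nv: "n \<bullet> v = perp_coord u n * perp_coord u v" using frame[of n v] n(2) v(1) by simp
  have "perp_coord u v \<noteq> 0" using horizontal_unit_parallel[OF u v(1,2)] v(3,4) by blast
  moreover have "perp_coord u n \<noteq> 0" using nw by auto
  ultimately show nv_neg: "n \<bullet> v < 0" using nv n(4) by (simp add: order_less_le)
  have "(perp_coord u n)^2 * (perp_coord u w * perp_coord u v) < 0"
    using mult_pos_neg[OF nw nv_neg[unfolded nv]] by (simp add: power2_eq_square algebra_simps)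
  then show "perp_coord u w * perp_coord u v < 0" by (simp add: mult_less_0_iff)
qed

lemma plane_decomposition:
  fixes u w n y :: pt
  assumes u: "u$3 = 0" "norm u = 1" and "w$3 \<noteq> 0" "n$3 \<noteq> 0"
    and "n \<bullet> u = 0" "n \<bullet> w = 0" "n \<bullet> y = 0"
  obtains a where "y = a *\<^sub>R u + (y$3 / w$3) *\<^sub>R w"
proof -
  note frame = inner_horizontal_frame[OF u]
  define v where "v = y - (y$3 / w$3) *\<^sub>R w"
  have v3: "v$3 = 0" using assms(3) by (simp add: v_def)
  have "perp_coord u n * perp_coord u w = - (n$3 * w$3)" using frame[of n w] assms(5,6) by simp
  then have "perp_coord u n \<noteq> 0" using assms(3,4) by auto
  moreover have "perp_coord u n * perp_coord u v = 0"
    using frame[of n v] assms(5-7) v3 by (simp add: v_def inner_diff_right)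
  ultimately have "perp_coord u v = 0" by simp
  then have "v = (v \<bullet> u) *\<^sub>R u"
    using u v3 by (intro horizontal_frame_eqI[OF u]) (auto simp: perp_coord_def norm_eq_1)
  then show thesis using that[of "v \<bullet> u"] by (simp add: v_def algebra_simps)
qed

text \<open>The vectors \<open>a u + c w\<close> in question form the \<open>60\<degree>\<close> wedge between \<open>w\<close> and \<open>w - u\<close>,
  while \<open>v\<close> lies (seen from above) on the other side of the line of \<open>u\<close>.\<close>
lemma no_equilateral_pair_across:
  assumes "equilateral_pair u w" "u$3 = 0" "v$3 = 0" "norm v = 1"
    and "perp_coord u w * perp_coord u v < 0" "a \<le> 0" "0 \<le> a + c" "0 < c"
  shows "\<not> equilateral_pair v (a *\<^sub>R u + c *\<^sub>R w)"
proof
  assume pair: "equilateral_pair v (a *\<^sub>R u + c *\<^sub>R w)"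
  note uw = equilateral_pair_inner[OF assms(1)]
  have u: "norm u = 1" using assms(1) by (simp add: equilateral_pair_def)
  note frame = inner_horizontal_frame[OF assms(2) u]
  define p where "p = v \<bullet> u"
  define q where "q = perp_coord u w * perp_coord u v"
  have "p*p + (perp_coord u v)^2 = 1"
    using frame[of v v] assms(3,4) by (simp add: p_def norm_eq_1 power2_eq_square)
  then have "p*p \<le> 1" by (smt (verit) zero_le_power2)
  moreover have "w \<bullet> v = p/2 + q"
    using frame[of w v] assms(3) uw(4) by (simp add: p_def q_def inner_commute)
  then have "2*a*p + c*(p + 2*q) = 1"
    using pair by (simp add: equilateral_pair_def p_def inner_add_right inner_commute algebra_simps)
  moreover have "a*a + a*c + c*c = 1"
    using pair
    by (simp add: equilateral_pair_def norm_eq_1 inner_add_left inner_add_right uw algebra_simps)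
  moreover have "\<lbrakk>2*a*p + c*(p + 2*q) = 1; p*p \<le> 1; a*a + a*c + c*c = 1;
      a \<le> 0; 0 \<le> a + c; 0 < c; q < 0\<rbrakk> \<Longrightarrow> False"
    by sos
  ultimately show False using assms(5-8) by (simp add: q_def)
qed

lemma adjacent_triangles_not_coplanar:
  fixes b u1 w1 u2 w3 n :: pt
  assumes t1: "t1 = convex hull {b, b + u1, b + w1}" "equilateral_pair u1 w1" "u1$3 = 0" "w1$3 > 0"
    and t3: "t3 = convex hull {b, b + u2, b + w3}" "equilateral_pair u2 w3" "u2$3 = 0" "w3$3 > 0"
    and t2: "unit_triangle t2" "b extreme_point_of t2"
    and n: "n$3 < 0" "n \<bullet> u1 = 0" "n \<bullet> w1 = 0" "n \<bullet> u2 < 0" "n \<bullet> w3 \<le> 0"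
    and sides: "perp_coord u1 w1 * perp_coord u1 u2 < 0"
    and t12: "aff_dim (t1 \<inter> t2) = 1" and t23: "aff_dim (t2 \<inter> t3) = 1"
    and disjoint: "rel_interior t1 \<inter> rel_interior t2 = {}"
  shows "\<not> coplanar (t1 \<union> t2)"
proof
  assume "coplanar (t1 \<union> t2)"
  moreover have "aff_dim t1 = 2" using t1(1) aff_dim_equilateral_triangle[OF t1(2)] by simp
  ultimately have t2_plane: "t2 \<subseteq> affine hull t1" by (rule coplanar_Un_imp_subset_affine_hull)
  have b: "b \<in> t1" "b \<in> t2" "b \<in> t3"
    using t1(1) t2(2) t3(1) by (simp_all add: hull_inc extreme_point_of_def)
  obtain p where "p \<in> t1 \<inter> t2" and "p \<noteq> b"
    using aff_dim_1_other_point[OF t12 IntI[OF b(1,2)]] .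
  then have p: "p \<in> t1" "p \<in> t2" "p \<noteq> b" by auto
  obtain q where "q \<in> t2 \<inter> t3" and "q \<noteq> b"
    using aff_dim_1_other_point[OF t23 IntI[OF b(2,3)]] .
  then have q: "q \<in> t2" "q \<in> t3" "q \<noteq> b" by auto
  have plane: "n \<bullet> (x - b) = 0" if "x \<in> t2" for x
    using t2_plane that affine_hull_triangle_in_hyperplane[OF n(2,3)] t1(1)
    by (auto simp: inner_diff_right affine_hull_convex_hull)
  obtain r k where rk: "0 \<le> r" "0 \<le> k" "q - b = r *\<^sub>R u2 + k *\<^sub>R w3"
    using q(2) unfolding t3(1) convex_hull_3_at_vertex by auto
  have "r * (n \<bullet> u2) + k * (n \<bullet> w3) = 0"
    using plane[OF q(1)] rk(3) by (simp add: inner_add_right)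
  moreover have "r * (n \<bullet> u2) \<le> 0" "k * (n \<bullet> w3) \<le> 0"
    using rk(1,2) n(4,5) by (simp_all add: mult_nonneg_nonpos)
  ultimately have "r * (n \<bullet> u2) = 0" and nw3: "k * (n \<bullet> w3) = 0" by linarith+
  then have "r = 0" using n(4) by simp
  then have qb: "q - b = k *\<^sub>R w3" using rk(3) by simp
  then have k: "0 < k" using rk(2) q(3) by (cases "k = 0") auto
  then have "n \<bullet> w3 = 0" using nw3 by simp
  define c where "c = w3$3 / w1$3"
  have c: "0 < c" using t1(4) t3(4) by (simp add: c_def)
  obtain a where w3: "w3 = a *\<^sub>R u1 + c *\<^sub>R w1"
    using plane_decomposition[OF t1(3) _ _ _ n(2,3) \<open>n \<bullet> w3 = 0\<close>] t1(2,4) n(1)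
    by (auto simp: equilateral_pair_def c_def)
  obtain x2 y2 where t2': "t2 = convex hull {b, b + x2, b + y2}" "equilateral_pair x2 y2"
    using unit_triangle_at_vertex[OF t2] .
  have "b + k *\<^sub>R (a *\<^sub>R u1 + c *\<^sub>R w1) \<in> t2" "norm (a *\<^sub>R u1 + c *\<^sub>R w1) = 1"
    using qb q(1) w3 t3(2) by (auto simp: equilateral_pair_def algebra_simps)
  then have "a \<le> 0" "0 \<le> a + c"
    using coplanar_neighbour_direction[OF t1(1,2) t2' t2_plane disjoint p _ k c] by auto
  moreover have "norm u2 = 1" using t3(2) by (simp add: equilateral_pair_def)
  ultimately show False
    using no_equilateral_pair_across[OF t1(2,3) t3(3) _ sides _ _ c] t3(2) w3 by blast
qed

section \<open>Domes\<close>

lemma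
  assumes "dome Q P T"
  shows dome_polytope: "polytope Q"
    and dome_aff_dim: "aff_dim Q = 3"
    and dome_base_facet: "P facet_of Q"
    and dome_finite: "finite T"
    and dome_unit_triangle: "t \<in> T \<Longrightarrow> unit_triangle t"
    and dome_triangle_in_facet: "t \<in> T \<Longrightarrow> \<exists>F. F facet_of Q \<and> F \<noteq> P \<and> t \<subseteq> F"
    and dome_facet_cover: "F facet_of Q \<Longrightarrow> F \<noteq> P \<Longrightarrow> \<Union>{t\<in>T. t \<subseteq> F} = F"
    and dome_rel_interior_disjoint:
      "t \<in> T \<Longrightarrow> t' \<in> T \<Longrightarrow> t \<noteq> t' \<Longrightarrow> rel_interior t \<inter> rel_interior t' = {}"
  using assms unfolding dome_def by simp_all

lemma dome_triangle_subset: "dome Q P T \<Longrightarrow> t \<in> T \<Longrightarrow> t \<subseteq> Q"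
  using dome_triangle_in_facet facet_of_imp_subset by blast

lemma dome_facet_subset_affine_hull:
  assumes dome: "dome Q P T" and "F facet_of Q" "t \<in> T" "t \<subseteq> F"
  shows "F \<subseteq> affine hull t"
proof -
  have "aff_dim t = 2" using aff_dim_unit_triangle dome_unit_triangle[OF dome assms(3)] by blast
  moreover have "aff_dim F = 2" using assms(2) dome_aff_dim[OF dome] by (simp add: facet_of_def)
  ultimately show ?thesis
    using affine_hull_eq_of_aff_dim_eq[OF assms(4)] hull_subset[of F affine] by simp
qed

lemma dome_triangle_not_horizontal:
  assumes dome: "dome Q P T" and "P \<subseteq> {x. x$3 = 0}" "Q \<subseteq> {x. x$3 \<ge> 0}" "t \<in> T"
  shows "\<not> t \<subseteq> {x. x$3 = 0}"
proof
  assume t_floor: "t \<subseteq> {x. x$3 = 0}"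
  obtain F where F: "F facet_of Q" "F \<noteq> P" "t \<subseteq> F"
    using dome_triangle_in_facet[OF dome assms(4)] by blast
  have "affine hull t \<subseteq> {x. axis 3 1 \<bullet> x = 0}"
    using t_floor affine_hyperplane[of "axis 3 1 :: pt" 0]
    by (intro hull_minimal) (auto simp: inner_axis')
  then have "F \<subseteq> {x. axis 3 1 \<bullet> x = 0}"
    using dome_facet_subset_affine_hull[OF dome F(1) assms(4) F(3)] by blast
  then have "F = P"
    using facet_in_supporting_hyperplane_unique[of Q "axis 3 1" 0 F P] F(1) assms(2,3)
      polytope_imp_convex[OF dome_polytope[OF dome]] dome_aff_dim[OF dome] dome_base_facet[OF dome]
    by (auto simp: inner_axis' axis_eq_0_iff)
  with F(2) show False by simp
qed

lemma triangle_floor_edge: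
  fixes b x y p :: pt
  assumes t: "t = convex hull {b, b + x, b + y}" "equilateral_pair x y"
    and up: "0 \<le> x$3" "0 \<le> y$3" "\<not> (x$3 = 0 \<and> y$3 = 0)"
    and p: "p \<in> t" "p \<noteq> b" "p$3 = b$3"
  obtains u w k where "t = convex hull {b, b + u, b + w}" "equilateral_pair u w"
    "u$3 = 0" "0 < w$3" "0 < k" "p = b + k *\<^sub>R u"
proof -
  obtain l m where lm: "0 \<le> l" "0 \<le> m" "p = b + l *\<^sub>R x + m *\<^sub>R y"
    using p(1) unfolding t(1) convex_hull_3_at_vertex by blast
  have "l * x$3 + m * y$3 = 0" "0 \<le> l * x$3" "0 \<le> m * y$3"
    using lm p(3) up(1,2) by simp_all
  then have z: "l * x$3 = 0" "m * y$3 = 0" by linarith+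
  show thesis
  proof (cases "x$3 = 0")
    case True
    then have "0 < y$3" "m = 0" using up z by auto
    then have "0 < l" using lm p(2) by (cases "l = 0") auto
    then show thesis using that[of x y l] True \<open>0 < y$3\<close> \<open>m = 0\<close> t lm(3) by simp
  next
    case False
    then have "0 < x$3" "l = 0" using up z by auto
    then have "0 < m" "y$3 = 0" using lm p(2) z by (cases "m = 0", auto)+
    moreover have "t = convex hull {b, b + y, b + x}" "equilateral_pair y x"
      using t by (auto simp: insert_commute equilateral_pair_def inner_commute)
    ultimately show thesis using that[of y x m] \<open>0 < x$3\<close> \<open>l = 0\<close> lm(3) by simp
  qed
qed

lemma dome_base_vertex_extreme_in_triangle:
  assumes dome: "dome Q P T" and "b extreme_point_of P" "t \<in> T" "b \<in> t"
  shows "b extreme_point_of t"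
proof -
  have "P face_of Q" using dome_base_facet[OF dome] by (simp add: facet_of_def)
  then have "b extreme_point_of Q" using extreme_point_of_face assms(2) by blast
  then show ?thesis
    using assms(4) dome_triangle_subset[OF dome assms(3)] unfolding extreme_point_of_def by blast
qed

lemma dome_triangle_floor_edge:
  assumes dome: "dome Q P T" and floor: "P \<subseteq> {x. x$3 = 0}" "Q \<subseteq> {x. x$3 \<ge> 0}"
    and b: "b extreme_point_of P" and t: "t \<in> T" "b \<in> t" and p: "p \<in> t" "p \<in> P" "p \<noteq> b"
  obtains u w k where "t = convex hull {b, b + u, b + w}" "equilateral_pair u w"
    "u$3 = 0" "0 < w$3" "0 < k" "p = b + k *\<^sub>R u"
proof -
  have tQ: "t \<subseteq> Q" using dome_triangle_subset[OF dome t(1)] .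
  have b3: "b$3 = 0" using b floor(1) by (auto simp: extreme_point_of_def)
  obtain x y where xy: "t = convex hull {b, b + x, b + y}" "equilateral_pair x y"
    using unit_triangle_at_vertex dome_unit_triangle[OF dome t(1)]
      dome_base_vertex_extreme_in_triangle[OF dome b t] by blast
  have "b + x \<in> t" "b + y \<in> t" unfolding xy(1) by (simp_all add: hull_inc)
  then have up: "0 \<le> x$3" "0 \<le> y$3" using tQ floor(2) b3 by auto
  have "\<not> (x$3 = 0 \<and> y$3 = 0)"
  proof
    assume "x$3 = 0 \<and> y$3 = 0"
    then have "t \<subseteq> {z. axis 3 1 \<bullet> z = 0}"
      unfolding xy(1) using b3 convex_hyperplane[of "axis 3 1 :: pt" 0]
      by (intro hull_minimal) (auto simp: inner_axis')
    then show False using dome_triangle_not_horizontal[OF dome floor t(1)]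
      by (auto simp: inner_axis')
  qed
  moreover have "p$3 = b$3" using p(2) floor(1) b3 by auto
  ultimately show thesis using triangle_floor_edge[OF xy up _ p(1,3)] that by blast
qed

lemma dome_vertex_frames:
  assumes dome: "dome Q P T" and floor: "P \<subseteq> {x. x$3 = 0}" "Q \<subseteq> {x. x$3 \<ge> 0}"
    and b: "b extreme_point_of P"
    and e1: "e1 face_of P" "aff_dim e1 = 1" "b \<in> e1"
    and e2: "e2 face_of P" "aff_dim e2 = 1" "b \<in> e2" and "e1 \<noteq> e2"
    and t1: "t1 \<in> T" "b \<in> t1" "aff_dim (t1 \<inter> e1) = 1"
    and t3: "t3 \<in> T" "b \<in> t3" "aff_dim (t3 \<inter> e2) = 1"
    and down: "downward_normal Q t1"
  obtains u1 w1 u2 w3 n where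
    "t1 = convex hull {b, b + u1, b + w1}" "equilateral_pair u1 w1" "u1$3 = 0" "w1$3 > 0"
    "t3 = convex hull {b, b + u2, b + w3}" "equilateral_pair u2 w3" "u2$3 = 0" "w3$3 > 0"
    "n$3 < 0" "n \<bullet> u1 = 0" "n \<bullet> w1 = 0" "n \<bullet> u2 < 0" "n \<bullet> w3 \<le> 0"
    "perp_coord u1 w1 * perp_coord u1 u2 < 0"
proof -
  obtain p1 where p1: "p1 \<in> t1 \<inter> e1" "p1 \<noteq> b"
    using aff_dim_1_other_point[OF t1(3) IntI[OF t1(2) e1(3)]] .
  have "p1 \<in> P" using p1(1) face_of_imp_subset[OF e1(1)] by blast
  then obtain u1 w1 k1 where U1: "t1 = convex hull {b, b + u1, b + w1}" "equilateral_pair u1 w1"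
      "u1$3 = 0" "w1$3 > 0" "0 < k1" "p1 = b + k1 *\<^sub>R u1"
    using dome_triangle_floor_edge[OF dome floor b t1(1,2) _ _ p1(2)] p1(1) by blast
  obtain p3 where p3: "p3 \<in> t3 \<inter> e2" "p3 \<noteq> b"
    using aff_dim_1_other_point[OF t3(3) IntI[OF t3(2) e2(3)]] .
  have "p3 \<in> P" using p3(1) face_of_imp_subset[OF e2(1)] by blast
  then obtain u2 w3 k2 where U3: "t3 = convex hull {b, b + u2, b + w3}" "equilateral_pair u2 w3"
      "u2$3 = 0" "w3$3 > 0" "0 < k2" "p3 = b + k2 *\<^sub>R u2"
    using dome_triangle_floor_edge[OF dome floor b t3(1,2) _ _ p3(2)] p3(1) by blast
  have u1: "norm u1 = 1" "u1 \<noteq> 0" and u2: "norm u2 = 1"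
    using U1(2) U3(2) by (auto simp: equilateral_pair_def)
  have "b + k1 *\<^sub>R u1 \<in> e1" "b + k2 *\<^sub>R u2 \<in> e2" using p1(1) p3(1) U1(6) U3(6) by auto
  then have "u2 \<noteq> u1" "u2 \<noteq> -u1"
    using edge_directions_distinct[OF b e1 _ U1(5) e2 _ U3(5) \<open>e1 \<noteq> e2\<close> u1(2)] by blast+
  obtain n d where n: "n$3 < 0" "\<And>x. x \<in> Q \<Longrightarrow> n \<bullet> x \<le> d" "\<And>x. x \<in> t1 \<Longrightarrow> n \<bullet> x = d"
    using down unfolding downward_normal_def by blast
  have "b + u1 \<in> t1" "b + w1 \<in> t1" "b + u2 \<in> Q" "b + w3 \<in> Q"
    using U1(1) U3(1) dome_triangle_subset[OF dome t3(1)] by (auto simp: hull_inc)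
  then have "n \<bullet> (b + u1) = n \<bullet> b" "n \<bullet> (b + w1) = n \<bullet> b"
      "n \<bullet> (b + u2) \<le> n \<bullet> b" "n \<bullet> (b + w3) \<le> n \<bullet> b"
    using n(2,3) n(3)[OF t1(2)] by auto
  then have nu: "n \<bullet> u1 = 0" "n \<bullet> w1 = 0" "n \<bullet> u2 \<le> 0" "n \<bullet> w3 \<le> 0"
    by (simp_all add: inner_add_right)
  note sep = normal_separates_edges[OF U1(3) u1(1) U3(3) u2 \<open>u2 \<noteq> u1\<close> \<open>u2 \<noteq> -u1\<close> U1(4) n(1) nu(1-3)]
  show thesis by (rule that[OF U1(1-4) U3(1-4) n(1) nu(1,2) sep(1) nu(4) sep(2)])
qed

lemma dome_triangles_near_vertex:
  assumes dome: "dome Q P T" and F: "F facet_of Q" "F \<noteq> P"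
  obtains e where "0 < e" "\<And>y. y \<in> F \<Longrightarrow> dist b y < e \<Longrightarrow> \<exists>t\<in>T. t \<subseteq> F \<and> b \<in> t \<and> y \<in> t"
proof -
  define U where "U = \<Union>{t\<in>T. b \<notin> t}"
  have "closed t" if "t \<in> T" for t
    by (rule compact_imp_closed[OF compact_unit_triangle[OF dome_unit_triangle[OF dome that]]])
  then have "open (- U)" unfolding U_def using dome_finite[OF dome]
    by (intro open_Compl closed_Union) auto
  moreover have "b \<in> - U" by (auto simp: U_def)
  ultimately obtain e where e: "0 < e" "ball b e \<subseteq> - U"
    using open_contains_ball by blast
  have "\<exists>t\<in>T. t \<subseteq> F \<and> b \<in> t \<and> y \<in> t" if "y \<in> F" "dist b y < e" for y
  proof -
    have "y \<in> \<Union>{t\<in>T. t \<subseteq> F}" using that(1) dome_facet_cover[OF dome F] by simp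
    then obtain t where "t \<in> T" "t \<subseteq> F" "y \<in> t" by blast
    moreover have "y \<notin> U" using e(2) that(2) by (auto simp: subset_iff)
    ultimately show ?thesis by (auto simp: U_def)
  qed
  then show thesis using that e(1) by blast
qed

lemma dome_face_angle_at_vertex:
  assumes dome: "dome Q P T" and F: "F facet_of Q" "F \<noteq> P"
    and t1: "t1 = convex hull {b, b + u, b + w}" "equilateral_pair u w" "t1 \<subseteq> F"
    and only: "\<And>t. t \<in> T \<Longrightarrow> b \<in> t \<Longrightarrow> t \<subseteq> F \<Longrightarrow> t = t1"
  shows "face_angle F b = pi / 3"
proof (rule face_angle_equilateral_cone[OF t1(2)])
  have vertices: "b \<in> t1" "b + u \<in> t1" "b + w \<in> t1" unfolding t1(1) by (simp_all add: hull_inc)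
  then show "b + u \<in> F" "b + w \<in> F" using t1(3) by auto
  obtain e where e: "0 < e" "\<And>y. y \<in> F \<Longrightarrow> dist b y < e \<Longrightarrow> \<exists>t\<in>T. t \<subseteq> F \<and> b \<in> t \<and> y \<in> t"
    using dome_triangles_near_vertex[OF dome F] by blast
  have near: "y \<in> convex hull {b, b + u, b + w}" if "y \<in> F" "dist b y < e" for y
    using e(2)[OF that] only t1(1) by blast
  have "convex F" using F(1) by (auto simp: facet_of_def face_of_imp_convex)
  moreover have "b \<in> F" using vertices(1) t1(3) by blast
  ultimately show "\<exists>l m. 0 \<le> l \<and> 0 \<le> m \<and> x = b + l *\<^sub>R u + m *\<^sub>R w" if "x \<in> F" for x
    using convex_locally_in_cone[OF _ _ e(1) near that] by metis
qed

theorem mainTheorem9: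
  fixes Q P :: "pt set" and T :: "pt set set" and b :: pt
    and e1 e2 t1 t2 t3 :: "pt set"
  assumes dome: "dome Q P T"
    and P_plane: "P \<subseteq> {x. x $ 3 = 0}"
    and above: "Q \<subseteq> {x. x $ 3 \<ge> 0}"
    and vertex: "b extreme_point_of P"
    and angle: "face_angle P b \<ge> 2 * pi / 3"
    and e1: "e1 face_of P" "aff_dim e1 = 1" "b \<in> e1"
    and e2: "e2 face_of P" "aff_dim e2 = 1" "b \<in> e2"
    and e12: "e1 \<noteq> e2"
    and incident: "{t \<in> T. b \<in> t} = {t1, t2, t3}"
    and distinct: "t1 \<noteq> t2" "t2 \<noteq> t3" "t1 \<noteq> t3"
    and t1e1: "aff_dim (t1 \<inter> e1) = 1"
    and t3e2: "aff_dim (t3 \<inter> e2) = 1"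
    and t12: "aff_dim (t1 \<inter> t2) = 1"
    and t23: "aff_dim (t2 \<inter> t3) = 1"
    and down: "downward_normal Q t1"
  shows "\<not> coplanar (t1 \<union> t2) \<and>
         (\<forall>F. F facet_of Q \<and> F \<noteq> P \<and> t1 \<subseteq> F \<longrightarrow> face_angle F b = pi / 3)"
proof -
  have T: "t1 \<in> T" "t2 \<in> T" "t3 \<in> T" and bt: "b \<in> t1" "b \<in> t2" "b \<in> t3"
    using incident by blast+
  obtain u1 w1 u2 w3 n where t1: "t1 = convex hull {b, b + u1, b + w1}" "equilateral_pair u1 w1"
      "u1$3 = 0" "w1$3 > 0"
    and t3: "t3 = convex hull {b, b + u2, b + w3}" "equilateral_pair u2 w3" "u2$3 = 0" "w3$3 > 0"
    and n: "n$3 < 0" "n \<bullet> u1 = 0" "n \<bullet> w1 = 0" "n \<bullet> u2 < 0" "n \<bullet> w3 \<le> 0"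
    and sides: "perp_coord u1 w1 * perp_coord u1 u2 < 0"
    by (rule dome_vertex_frames[OF dome P_plane above vertex e1 e2 e12
          T(1) bt(1) t1e1 T(3) bt(3) t3e2 down])
  have not_coplanar: "\<not> coplanar (t1 \<union> t2)"
    by (rule adjacent_triangles_not_coplanar[OF t1 t3 dome_unit_triangle[OF dome T(2)]
          dome_base_vertex_extreme_in_triangle[OF dome vertex T(2) bt(2)] n sides t12 t23
          dome_rel_interior_disjoint[OF dome T(1,2) distinct(1)]])
  moreover have "face_angle F b = pi / 3" if F: "F facet_of Q" "F \<noteq> P" "t1 \<subseteq> F" for F
  proof (rule dome_face_angle_at_vertex[OF dome F(1,2) t1(1,2) F(3)])
    fix t assume t: "t \<in> T" "b \<in> t" "t \<subseteq> F"
    then have plane: "t \<subseteq> affine hull {b, b + u1, b + w1}"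
      using dome_facet_subset_affine_hull[OF dome F(1) T(1) F(3)] t1(1)
      by (auto simp: affine_hull_convex_hull)
    have "t \<noteq> t2"
      using plane not_coplanar t1(1) convex_hull_subset_affine_hull unfolding coplanar_def by blast
    moreover have "b + u2 \<in> t3" using t3(1) by (simp add: hull_inc)
    then have "t \<noteq> t3"
      using plane affine_hull_triangle_in_hyperplane[OF n(2,3)] n(4) by (force simp: inner_add_right)
    ultimately show "t = t1" using incident t(1,2) by blast
  qed
  ultimately show ?thesis by blast
qed

end
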